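(* For every $\rho \in \mathcal{S}$ and $\sigma \in \mathcal{P}$, $D^{\mathbb{P}}(\rho\|\sigma) = D^{\mathbb{M}}(\rho\|\sigma)$.
   Context: Work on a $d$-dimensional complex Hilbert space. $\mathcal{P}$ denotes the positive semidefinite operators, $\mathcal{S}$ the density operators; $\log$ is the natural logarithm. For a probability measure $P$ and a positive measure $Q$ on a finite set $\mathcal{X}$, the Kullback–Leibler divergence is $D(P\|Q)=\sum_x P(x)\log\frac{P(x)}{Q(x)}$ (terms with $P(x)=0$ are $0$), and $D(P\|Q)=+\infty$ if $P$ is not absolutely continuous w.r.t. $Q$. A POVM on a finite set $\mathcal{X}$ is a map $M$ from $\mathcal{X}$ to positive semidefinite operators with $\sum_x M(x)=1$; it induces the measure $P_{\rho,M}(x)=\operatorname{tr}[M(x)\rho]$. The measured relative entropy is $D^{\mathbb{M}}(\rho\|\sigma):=\sup_{(\mathcal{X},M)} D(P_{\rho,M}\|P_{\sigma,M})$, supremum over all finite sets $\mathcal{X}$ and POVMs $M$ on $\mathcal{X}$. The projectively measured relative entropy is \[ D^{\mathbb{P}}(\rho\|\sigma) := \sup_{ \{ P_i \}_{i=1}^d} \sum_{i=1}^d \operatorname{tr} [P_i \rho] \log \frac{\operatorname{tr} [P_i \rho]}{\operatorname{tr} [P_i \sigma]}, \] supremum over families of $d$ mutually orthogonal rank-one projectors (same conventions for $0$ and $\infty$). *)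

theory Defs
  imports "HOL-Analysis.Analysis"
begin

text \<open>Operators on a d-dimensional complex Hilbert space: d = CARD('n),
  operators are complex d x d matrices of type complex^'n^'n.\<close>

definition adjoint :: "complex^'n^'n \<Rightarrow> complex^'n^'n" where
  "adjoint A = (\<chi> i j. cnj (A $ j $ i))"

definition hermitian :: "complex^'n^'n \<Rightarrow> bool" where
  "hermitian A \<longleftrightarrow> adjoint A = A"

definition quad_form :: "complex^'n^'n \<Rightarrow> complex^'n \<Rightarrow> complex" where
  "quad_form A v = (\<Sum>i\<in>UNIV. cnj (v $ i) * (A *v v) $ i)"

definition psd :: "complex^'n^'n \<Rightarrow> bool" where
  "psd A \<longleftrightarrow> hermitian A \<and> (\<forall>v. 0 \<le> Re (quad_form A v))"

definition density_operator :: "complex^'n^'n \<Rightarrow> bool" where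
  "density_operator \<rho> \<longleftrightarrow> psd \<rho> \<and> trace \<rho> = 1"

definition KL :: "'x set \<Rightarrow> ('x \<Rightarrow> real) \<Rightarrow> ('x \<Rightarrow> real) \<Rightarrow> ereal" where
  "KL X P Q =
     (if \<exists>x\<in>X. P x \<noteq> 0 \<and> Q x = 0 then \<infinity>
      else ereal (\<Sum>x\<in>X. if P x = 0 then 0 else P x * ln (P x / Q x)))"

text \<open>POVM on a finite set X (finite sets are represented, w.l.o.g., as finite
  sets of natural numbers).\<close>
definition povm :: "'x set \<Rightarrow> ('x \<Rightarrow> complex^'n^'n) \<Rightarrow> bool" where
  "povm X M \<longleftrightarrow> finite X \<and> (\<forall>x\<in>X. psd (M x)) \<and> (\<Sum>x\<in>X. M x) = mat 1"

definition meas :: "('x \<Rightarrow> complex^'n^'n) \<Rightarrow> complex^'n^'n \<Rightarrow> 'x \<Rightarrow> real" where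
  "meas M \<rho> x = Re (trace (M x ** \<rho>))"

definition measured_rel_entropy :: "complex^'n^'n \<Rightarrow> complex^'n^'n \<Rightarrow> ereal" where
  "measured_rel_entropy \<rho> \<sigma> =
     (SUP XM \<in> {(X :: nat set, M). povm X M}.
        KL (fst XM) (meas (snd XM) \<rho>) (meas (snd XM) \<sigma>))"

definition rank_one_projector :: "complex^'n^'n \<Rightarrow> bool" where
  "rank_one_projector P \<longleftrightarrow> P ** P = P \<and> adjoint P = P \<and> rank P = 1"

definition orth_rank_one_family :: "('n \<Rightarrow> complex^'n^'n) \<Rightarrow> bool" where
  "orth_rank_one_family P \<longleftrightarrow>
     (\<forall>i. rank_one_projector (P i)) \<and> (\<forall>i j. i \<noteq> j \<longrightarrow> P i ** P j = 0)"

definition proj_measured_rel_entropy :: "complex^'n^'n \<Rightarrow> complex^'n^'n \<Rightarrow> ereal" where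
  "proj_measured_rel_entropy \<rho> \<sigma> =
     (SUP P \<in> {P :: 'n \<Rightarrow> complex^'n^'n. orth_rank_one_family P}.
        KL UNIV (meas P \<rho>) (meas P \<sigma>))"

end

theory Submission
  imports Defs
begin

text \<open>A projective measurement is a POVM, so \<open>D\<^sup>P \<le> D\<^sup>M\<close>. Conversely, every POVM divergence
  is the value at \<open>t = P / Q\<close> of the variational lower bound
  \<open>\<Sum>x. P x ln (t x) + 1 - \<Sum>x. Q x t x\<close> of the KL divergence (with a limiting argument when
  \<open>P\<close> is not absolutely continuous w.r.t. \<open>Q\<close>). Given a POVM \<open>M\<close> and weights \<open>t \<ge> 0\<close>, measure
  in an eigenbasis \<open>e\<close> of \<open>\<omega> = \<Sum>x. t x M x\<close>, with eigenvalues \<open>\<lambda>\<close>. Operator convexity of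
  \<open>x \<mapsto> 1 / (x + s)\<close> gives \<open>\<Sum>i. \<langle>e i, \<rho> e i\<rangle> / (\<lambda> i + s) \<le> \<Sum>x. tr (M x \<rho>) / (t x + s)\<close>
  for all \<open>s > 0\<close>; integrating over \<open>s\<close> yields \<open>\<Sum>x. P x ln (t x) \<le> \<Sum>i. \<langle>e i, \<rho> e i\<rangle> ln (\<lambda> i)\<close>,
  while \<open>\<Sum>i. \<lambda> i \<langle>e i, \<sigma> e i\<rangle> = tr (\<omega> \<sigma>) = \<Sum>x. t x Q x\<close>. Hence the projective measurement
  \<open>{e i e i\<^sup>*}\<close> reaches at least the same variational value, and \<open>D\<^sup>M \<le> D\<^sup>P\<close>.\<close>

definition cinner :: "complex^'n \<Rightarrow> complex^'n \<Rightarrow> complex" where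
  "cinner u v = (\<Sum>i\<in>UNIV. cnj (u$i) * v$i)"

definition outer :: "complex^'n \<Rightarrow> complex^'n^'n" where
  "outer e = (\<chi> i j. e$i * cnj (e$j))"

lemma quad_form_cinner: "quad_form A v = cinner v (A *v v)"
  by (simp add: quad_form_def cinner_def)

lemma cinner_add_right: "cinner u (v + w) = cinner u v + cinner u w"
  by (simp add: cinner_def distrib_left sum.distrib)

lemma cinner_add_left: "cinner (u + v) w = cinner u w + cinner v w"
  by (simp add: cinner_def distrib_right sum.distrib)

lemma cinner_diff_right: "cinner u (v - w) = cinner u v - cinner u w"
  by (simp add: cinner_def right_diff_distrib sum_subtractf)

lemma cinner_scale_right: "cinner u (c *s v) = c * cinner u v"
  by (simp add: cinner_def sum_distrib_left algebra_simps)

lemma cinner_scale_left: "cinner (c *s u) v = cnj c * cinner u v"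
  by (simp add: cinner_def sum_distrib_left algebra_simps)

lemma cinner_zero_right [simp]: "cinner u 0 = 0"
  by (simp add: cinner_def)

lemma cinner_zero_left [simp]: "cinner 0 u = 0"
  by (simp add: cinner_def)

lemma cinner_sum_right: "cinner u (sum f S) = (\<Sum>x\<in>S. cinner u (f x))"
  unfolding cinner_def by (simp add: sum_distrib_left sum_component) (rule sum.swap)

lemma cinner_sum_left: "cinner (sum f S) u = (\<Sum>x\<in>S. cinner (f x) u)"
  unfolding cinner_def by (simp add: sum_distrib_right sum_component) (rule sum.swap)

lemma cnj_cinner: "cnj (cinner u v) = cinner v u"
  by (simp add: cinner_def mult.commute)

lemma Re_cinner_commute: "Re (cinner u v) = Re (cinner v u)"
  by (metis cnj_cinner cnj.sel(1))

lemma cnj_mult_self: "cnj z * z = of_real ((cmod z)^2)"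
  by (metis complex_norm_square mult.commute of_real_power)

lemma cinner_self: "cinner v v = of_real (\<Sum>i\<in>UNIV. (cmod (v$i))^2)"
  unfolding cinner_def cnj_mult_self of_real_sum by simp

lemma Re_cinner_self: "Re (cinner v v) = (\<Sum>i\<in>UNIV. (cmod (v$i))^2)"
  by (simp add: cinner_self)

lemma cinner_self_real: "cinner v v = of_real (Re (cinner v v))"
  by (simp add: cinner_self)

lemma cinner_self_nonneg: "0 \<le> Re (cinner v v)"
  by (simp add: Re_cinner_self sum_nonneg)

lemma cinner_self_eq_0: "cinner v v = 0 \<longleftrightarrow> v = 0"
proof
  assume "cinner v v = 0"
  hence "(\<Sum>i\<in>UNIV. (cmod (v$i))^2) = 0" using cinner_self[of v] of_real_eq_0_iff by metis
  hence "\<forall>i\<in>UNIV. (cmod (v$i))^2 = 0" by (subst (asm) sum_nonneg_eq_0_iff) auto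
  thus "v = 0" by (simp add: vec_eq_iff)
qed simp

lemma cinner_self_pos: "v \<noteq> 0 \<Longrightarrow> Re (cinner v v) > 0"
  using cinner_self_nonneg[of v] cinner_self_eq_0[of v] cinner_self_real[of v]
  by (metis less_eq_real_def of_real_0)

lemma norm_power2_cinner: "(norm v)^2 = Re (cinner v v)"
  by (simp add: norm_vec_def L2_set_def Re_cinner_self sum_nonneg)

lemma cinner_adjoint: "cinner u (A *v v) = cinner (adjoint A *v u) v"
  unfolding cinner_def adjoint_def matrix_vector_mult_def
  by (simp add: sum_distrib_left sum_distrib_right algebra_simps) (rule sum.swap)

lemma hermitian_cinner: "hermitian A \<Longrightarrow> cinner u (A *v v) = cinner (A *v u) v"
  by (metis cinner_adjoint hermitian_def)

lemma hermitian_mat_1: "hermitian (mat 1)"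
  by (simp add: hermitian_def adjoint_def mat_def vec_eq_iff)

lemma hermitian_quadratic_expand:
  fixes A :: "complex^'n^'n"
  assumes "hermitian A"
  shows "Re (cinner (v + of_real r *s z) (A *v (v + of_real r *s z))) =
    Re (cinner v (A *v v)) + 2 * r * Re (cinner z (A *v v)) + r^2 * Re (cinner z (A *v z))"
proof -
  have "Re (cinner v (A *v z)) = Re (cinner z (A *v v))"
    by (metis Re_cinner_commute assms hermitian_cinner)
  thus ?thesis
    by (simp add: matrix_vector_right_distrib vector_scalar_commute cinner_add_left cinner_add_right
        cinner_scale_left cinner_scale_right power2_eq_square algebra_simps)
qed

lemma cinner_self_expand:
  "Re (cinner (v + of_real r *s z) (v + of_real r *s z)) =
    Re (cinner v v) + 2 * r * Re (cinner z v) + r^2 * Re (cinner z z)"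
  using hermitian_quadratic_expand[OF hermitian_mat_1, of v r z] by simp

lemma outer_mult_vector: "outer e *v v = cinner e v *s e"
  by (simp add: outer_def cinner_def matrix_vector_mult_def vec_eq_iff sum_distrib_left algebra_simps)

lemma trace_outer_mult: "trace (outer e ** A) = cinner e (A *v e)"
  unfolding trace_def outer_def cinner_def matrix_matrix_mult_def matrix_vector_mult_def
  by (simp add: sum_distrib_left algebra_simps) (rule sum.swap)

section \<open>Orthonormal bases and the spectral theorem\<close>

definition orthonormal :: "(complex^'n) set \<Rightarrow> bool" where
  "orthonormal S \<longleftrightarrow> (\<forall>u\<in>S. \<forall>v\<in>S. cinner u v = (if u = v then 1 else 0))"

definition orthonormal_basis :: "('n \<Rightarrow> complex^'n) \<Rightarrow> bool" where
  "orthonormal_basis e \<longleftrightarrow> (\<forall>i j. cinner (e i) (e j) = (if i = j then 1 else 0))"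

definition real_eigenvectors :: "complex^'n^'n \<Rightarrow> (complex^'n) set" where
  "real_eigenvectors A = {v. \<exists>c::real. A *v v = of_real c *s v}"

lemma orthonormal_insert:
  assumes "orthonormal S" "cinner v v = 1" "\<forall>s\<in>S. cinner s v = 0"
  shows "orthonormal (insert v S)"
  unfolding orthonormal_def
proof (intro ballI)
  fix u w assume "u \<in> insert v S" "w \<in> insert v S"
  moreover have "cinner v s = 0" if "s \<in> S" for s
    using assms(3) that cnj_cinner[of s v] by simp
  ultimately show "cinner u w = (if u = w then 1 else 0)"
    using assms unfolding orthonormal_def by auto
qed

lemma orthonormal_independent:
  assumes "orthonormal S" "finite S"
  shows "vec.independent S"
proof -
  { fix c assume h: "(\<Sum>v\<in>S. c v *s v) = 0"
    have "c v = 0" if v: "v \<in> S" for v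
    proof -
      have "0 = cinner v (\<Sum>w\<in>S. c w *s w)" using h by simp
      also have "\<dots> = (\<Sum>w\<in>S. if v = w then c w else 0)"
        using assms(1) v unfolding orthonormal_def
        by (auto simp: cinner_sum_right cinner_scale_right intro: sum.cong)
      also have "\<dots> = c v" using v assms(2) by simp
      finally show "c v = 0" by simp
    qed }
  thus ?thesis using assms(2) by (simp add: vec.independent_explicit)
qed

lemma orthonormal_exists_orthogonal:
  assumes "orthonormal S" "finite S" "card S < CARD('n)"
  shows "\<exists>w::complex^'n. w \<noteq> 0 \<and> (\<forall>s\<in>S. cinner s w = 0)"
proof -
  have "vec.span S \<noteq> UNIV"
  proof
    assume "vec.span S = UNIV"
    hence "vec.dim (vec.span S) = CARD('n)" using vec_dim_card by simp
    moreover have "vec.dim (vec.span S) = card S"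
      using vec.dim_span_eq_card_independent orthonormal_independent assms by blast
    ultimately show False using assms(3) by simp
  qed
  then obtain v where v: "v \<notin> vec.span S" by auto
  define w where "w = v - (\<Sum>s\<in>S. cinner s v *s s)"
  have "(\<Sum>s\<in>S. cinner s v *s s) \<in> vec.span S"
    by (rule vec.span_sum) (auto intro: vec.span_scale vec.span_base)
  hence "w \<noteq> 0" using v by (auto simp: w_def)
  moreover have "cinner s w = 0" if s: "s \<in> S" for s
  proof -
    have "cinner s (\<Sum>t\<in>S. cinner t v *s t) = (\<Sum>t\<in>S. if s = t then cinner t v else 0)"
      using assms(1) s unfolding orthonormal_def
      by (auto simp: cinner_sum_right cinner_scale_right intro: sum.cong)
    thus ?thesis using s assms(2) by (simp add: w_def cinner_diff_right)
  qed
  ultimately show ?thesis by blast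
qed

lemma linear_le_quadratic_imp_zero:
  fixes a c :: real
  assumes "\<And>r. 2*r*a \<le> r^2 * c" "c \<ge> 0"
  shows "a = 0"
proof -
  define r where "r = a/(c+1)"
  have "2*r*a \<le> r^2*c" by (rule assms(1))
  hence "(c+1)^2 * (2*r*a) \<le> (c+1)^2 * (r^2*c)" by (rule mult_left_mono) simp
  moreover have c1: "c + 1 \<noteq> 0" using assms(2) by auto
  moreover have "(c+1)^2 * (2*r*a) = 2*a*a*(c+1)" using c1
    by (simp add: r_def power2_eq_square field_simps)
  moreover have "(c+1)^2 * (r^2*c) = a*a*c" using c1
    by (simp add: r_def power_divide power2_eq_square)
  ultimately have "2*a*a*(c+1) \<le> a*a*c" by simp
  hence "a*a*(c+2) \<le> 0" by (simp add: algebra_simps)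
  hence "a*a \<le> 0" using assms(2) by (simp add: mult_le_0_iff)
  thus ?thesis by (metis mult_eq_0_iff antisym zero_le_square)
qed

lemma rayleigh_maximiser_eigenvector:
  fixes A :: "complex^'n^'n"
  assumes herm: "hermitian A" and W: "vec.subspace W" and inv: "\<And>w. w \<in> W \<Longrightarrow> A *v w \<in> W"
    and v: "v \<in> W" "Re (cinner v v) = 1"
    and max: "\<And>w. w \<in> W \<Longrightarrow> Re (cinner w (A *v w)) \<le> Re (cinner v (A *v v)) * Re (cinner w w)"
  shows "A *v v = of_real (Re (cinner v (A *v v))) *s v"
proof -
  define \<mu> where "\<mu> = Re (cinner v (A *v v))"
  define y where "y = A *v v - of_real \<mu> *s v"
  have yW: "y \<in> W" unfolding y_def using v inv W by (simp add: vec.subspace_diff vec.subspace_scale)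
  have orth: "Re (cinner z y) = 0" if z: "z \<in> W" for z
  proof (rule linear_le_quadratic_imp_zero)
    show "0 \<le> \<mu> * Re (cinner z z) - Re (cinner z (A *v z))"
      using max[OF z] by (simp add: \<mu>_def)
    fix r
    have "v + of_real r *s z \<in> W" using v z W by (simp add: vec.subspace_add vec.subspace_scale)
    from max[OF this] show "2 * r * Re (cinner z y) \<le> r^2 * (\<mu> * Re (cinner z z) - Re (cinner z (A *v z)))"
      unfolding hermitian_quadratic_expand[OF herm] cinner_self_expand
      by (simp add: v y_def \<mu>_def cinner_diff_right cinner_scale_right algebra_simps)
  qed
  have "cinner y y = 0"
  proof (rule complex_eqI)
    show "Re (cinner y y) = Re 0" using orth[OF yW] by simp
    have "\<i> *s y \<in> W" using yW W by (simp add: vec.subspace_scale)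
    thus "Im (cinner y y) = Im 0" using orth by (fastforce simp: cinner_scale_left)
  qed
  thus ?thesis by (simp add: cinner_self_eq_0 y_def \<mu>_def)
qed

lemma rayleigh_quotient_attains_max:
  fixes A :: "complex^'n^'n"
  assumes W: "vec.subspace W" "closed W" and w0: "w0 \<in> W" "w0 \<noteq> 0"
  shows "\<exists>v\<in>W. Re (cinner v v) = 1 \<and>
    (\<forall>w\<in>W. Re (cinner w (A *v w)) \<le> Re (cinner v (A *v v)) * Re (cinner w w))"
proof -
  define f where "f v = Re (cinner v (A *v v))" for v
  define K where "K = {v. Re (cinner v v) = 1} \<inter> W"
  have normalise: "of_real (1 / sqrt (Re (cinner w w))) *s w \<in> K" if "w \<in> W" "w \<noteq> 0" for w
    using that cinner_self_pos[of w] W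
    by (simp add: K_def cinner_scale_left cinner_scale_right vec.subspace_scale flip: power2_eq_square)
  have "K \<subseteq> cball 0 1"
    by (auto simp: K_def norm_power2_cinner[symmetric] power2_eq_1_iff)
  moreover have "closed K"
    unfolding K_def
    by (intro closed_Int closed_Collect_eq W(2)) (auto simp: cinner_def intro!: continuous_intros)
  ultimately have "compact K" using compact_eq_bounded_closed bounded_subset bounded_cball by blast
  moreover have "K \<noteq> {}" using normalise[OF w0] by blast
  moreover have "continuous_on K f"
    unfolding f_def cinner_def matrix_vector_mult_def by (intro continuous_intros)
  ultimately obtain v where vK: "v \<in> K" and vmax: "\<forall>y\<in>K. f y \<le> f v"
    using continuous_attains_sup by blast
  have "f w \<le> f v * Re (cinner w w)" if w: "w \<in> W" for w
  proof (cases "w = 0")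
    case True thus ?thesis by (simp add: f_def)
  next
    case False
    define n where "n = Re (cinner w w)"
    have n: "n > 0" using cinner_self_pos[OF False] by (simp add: n_def)
    have "f (of_real (1 / sqrt n) *s w) \<le> f v" using vmax normalise[OF w False] by (simp add: n_def)
    moreover have "f (of_real (1 / sqrt n) *s w) = f w / n"
      using n by (simp add: f_def vector_scalar_commute cinner_scale_left cinner_scale_right flip: power2_eq_square)
    ultimately have "f w / n \<le> f v" by simp
    thus ?thesis using n by (simp add: n_def[symmetric] pos_divide_le_eq mult.commute)
  qed
  thus ?thesis using vK unfolding K_def f_def by blast
qed

lemma hermitian_invariant_subspace_eigenvector:
  fixes A :: "complex^'n^'n"
  assumes herm: "hermitian A" and W: "vec.subspace W" "closed W"
    and inv: "\<And>w. w \<in> W \<Longrightarrow> A *v w \<in> W" and w0: "w0 \<in> W" "w0 \<noteq> 0"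
  shows "\<exists>v\<in>W. cinner v v = 1 \<and> v \<in> real_eigenvectors A"
proof -
  obtain v where v: "v \<in> W" "Re (cinner v v) = 1"
    and max: "\<And>w. w \<in> W \<Longrightarrow> Re (cinner w (A *v w)) \<le> Re (cinner v (A *v v)) * Re (cinner w w)"
    using rayleigh_quotient_attains_max[OF W w0] by blast
  have "A *v v = of_real (Re (cinner v (A *v v))) *s v"
    by (rule rayleigh_maximiser_eigenvector[OF herm W(1) inv v max])
  hence "v \<in> real_eigenvectors A" by (auto simp: real_eigenvectors_def)
  moreover have "cinner v v = 1" using v(2) cinner_self_real[of v] by simp
  ultimately show ?thesis using v(1) by blast
qed

lemma hermitian_orthonormal_eigenvectors:
  fixes A :: "complex^'n^'n"
  assumes herm: "hermitian A" and "k \<le> CARD('n)"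
  shows "\<exists>S. finite S \<and> card S = k \<and> orthonormal S \<and> S \<subseteq> real_eigenvectors A"
  using assms(2)
proof (induction k)
  case 0
  show ?case by (rule exI[of _ "{}"]) (simp add: orthonormal_def)
next
  case (Suc k)
  then obtain S where S: "finite S" "card S = k" "orthonormal S" "S \<subseteq> real_eigenvectors A" by auto
  define W where "W = {w. \<forall>s\<in>S. cinner s w = 0}"
  have "vec.subspace W"
    by (auto simp: W_def vec.subspace_def cinner_add_right cinner_scale_right)
  moreover have "closed W"
    unfolding W_def Collect_ball_eq
    by (intro closed_INT ballI closed_Collect_eq) (auto simp: cinner_def intro!: continuous_intros)
  moreover have "A *v w \<in> W" if "w \<in> W" for w
  proof -
    have "cinner s (A *v w) = 0" if s: "s \<in> S" for s
    proof -
      obtain c :: real where "A *v s = of_real c *s s" using S(4) s by (auto simp: real_eigenvectors_def)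
      thus ?thesis using hermitian_cinner[OF herm, of s w] \<open>w \<in> W\<close> s by (simp add: W_def cinner_scale_left)
    qed
    thus ?thesis by (simp add: W_def)
  qed
  moreover obtain w0 where "w0 \<noteq> 0" "w0 \<in> W"
    using orthonormal_exists_orthogonal[OF S(3,1)] S(2) Suc.prems by (auto simp: W_def)
  ultimately obtain v where v: "v \<in> W" "cinner v v = 1" "v \<in> real_eigenvectors A"
    using hermitian_invariant_subspace_eigenvector[OF herm] by metis
  have "v \<notin> S" using v by (auto simp: W_def)
  thus ?case using S v orthonormal_insert[OF S(3) v(2)]
    by (intro exI[of _ "insert v S"]) (auto simp: W_def)
qed

theorem hermitian_spectral:
  fixes A :: "complex^'n^'n"
  assumes "hermitian A"
  shows "\<exists>e l. orthonormal_basis e \<and> (\<forall>i. A *v e i = of_real (l i) *s e i)"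
proof -
  obtain S where S: "finite S" "card S = CARD('n)" "orthonormal S" "S \<subseteq> real_eigenvectors A"
    using hermitian_orthonormal_eigenvectors[OF assms] by blast
  obtain e where e: "bij_betw e (UNIV::'n set) S"
    using finite_same_card_bij[of "UNIV::'n set" S] S by auto
  have "orthonormal_basis e"
    using S(3) e unfolding orthonormal_basis_def orthonormal_def bij_betw_def inj_on_def by auto
  moreover have "\<exists>c. A *v e i = of_real c *s e i" for i
    using e S(4) by (auto simp: real_eigenvectors_def bij_betw_def)
  ultimately show ?thesis by metis
qed

lemma independent_family_span_UNIV:
  fixes u :: "'n \<Rightarrow> complex^'n"
  assumes "inj u" "vec.independent (range u)"
  shows "vec.span (range u) = UNIV"
proof -
  have "card (range u) = CARD('n)" using assms(1) by (simp add: card_image)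
  moreover have "vec.dim (UNIV :: (complex^'n) set) = CARD('n)" by (rule vec_dim_card)
  ultimately show ?thesis
    using vec.card_eq_dim[of "range u" UNIV] assms(2) by auto
qed

lemma orthonormal_basis_expansion:
  fixes e :: "'n \<Rightarrow> complex^'n"
  assumes "orthonormal_basis e"
  shows "v = (\<Sum>i\<in>UNIV. cinner (e i) v *s e i)"
proof -
  have inj: "inj e"
    using assms unfolding orthonormal_basis_def inj_def by (metis zero_neq_one)
  have "orthonormal (range e)"
    using assms inj unfolding orthonormal_basis_def orthonormal_def by (auto simp: inj_eq)
  hence span: "vec.span (range e) = UNIV"
    using independent_family_span_UNIV[OF inj] by (simp add: orthonormal_independent)
  define w where "w = v - (\<Sum>i\<in>UNIV. cinner (e i) v *s e i)"
  have "cinner (e j) w = 0" for j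
  proof -
    have "cinner (e j) (\<Sum>i\<in>UNIV. cinner (e i) v *s e i) = (\<Sum>i\<in>UNIV. cinner (e i) v * cinner (e j) (e i))"
      by (simp add: cinner_sum_right cinner_scale_right)
    also have "\<dots> = (\<Sum>i\<in>UNIV. if j = i then cinner (e i) v else 0)"
      using assms unfolding orthonormal_basis_def by (intro sum.cong) auto
    finally show ?thesis by (simp add: w_def cinner_diff_right)
  qed
  moreover have "vec.subspace {u. cinner u w = 0}"
    by (auto simp: vec.subspace_def cinner_add_left cinner_scale_left)
  ultimately have "vec.span (range e) \<subseteq> {u. cinner u w = 0}"
    by (intro vec.span_minimal) auto
  hence "cinner w w = 0" using span by auto
  hence "w = 0" by (simp add: cinner_self_eq_0)
  thus ?thesis unfolding w_def by simp
qed

lemma sum_matrix_vector_mult: "sum f X *v v = (\<Sum>x\<in>X. f x *v v)"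
  for v :: "'a::comm_semiring_1^'n"
proof -
  have "(sum f X *v v) $ i = (\<Sum>x\<in>X. f x *v v) $ i" for i
    unfolding matrix_vector_mult_def by (simp add: sum_component sum_distrib_right) (rule sum.swap)
  thus ?thesis by (simp add: vec_eq_iff)
qed

lemma sum_matrix_mult: "sum f X ** B = (\<Sum>x\<in>X. f x ** B)"
  for B :: "'a::comm_semiring_1^'n^'m"
proof -
  have "(sum f X ** B) $ i $ j = (\<Sum>x\<in>X. f x ** B) $ i $ j" for i j
    unfolding matrix_matrix_mult_def by (simp add: sum_component sum_distrib_right) (rule sum.swap)
  thus ?thesis by (simp add: vec_eq_iff)
qed

lemma matrix_mult_sum: "B ** sum f X = (\<Sum>x\<in>X. B ** f x)"
  for B :: "'a::comm_semiring_1^'n^'m"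
proof -
  have "(B ** sum f X) $ i $ j = (\<Sum>x\<in>X. B ** f x) $ i $ j" for i j
    unfolding matrix_matrix_mult_def by (simp add: sum_component sum_distrib_left) (rule sum.swap)
  thus ?thesis by (simp add: vec_eq_iff)
qed

lemma trace_sum: "trace (sum f X) = (\<Sum>x\<in>X. trace (f x :: 'a::semiring_1^'n^'n))"
  unfolding trace_def by (simp add: sum_component) (rule sum.swap)

lemma sum_outer_orthonormal_basis:
  fixes e :: "'n \<Rightarrow> complex^'n"
  assumes "orthonormal_basis e"
  shows "(\<Sum>i\<in>UNIV. outer (e i)) = mat 1"
  unfolding matrix_eq
  by (simp add: sum_matrix_vector_mult outer_mult_vector orthonormal_basis_expansion[OF assms, symmetric])

lemma trace_mult_eigenbasis:
  fixes f :: "'n \<Rightarrow> complex^'n" and M B :: "complex^'n^'n"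
  assumes "orthonormal_basis f" "\<And>j. B *v f j = c j *s f j"
  shows "trace (M ** B) = (\<Sum>j\<in>UNIV. c j * cinner (f j) (M *v f j))"
proof -
  have "trace (M ** B) = trace ((M ** B) ** (\<Sum>j\<in>UNIV. outer (f j)))"
    by (simp add: sum_outer_orthonormal_basis[OF assms(1)])
  also have "\<dots> = (\<Sum>j\<in>UNIV. trace ((M ** B) ** outer (f j)))"
    by (simp add: matrix_mult_sum trace_sum)
  also have "\<dots> = (\<Sum>j\<in>UNIV. trace (outer (f j) ** (M ** B)))"
    by (rule sum.cong[OF refl], rule trace_mul_sym)
  also have "\<dots> = (\<Sum>j\<in>UNIV. c j * cinner (f j) (M *v f j))"
    by (simp add: trace_outer_mult assms(2) vector_scalar_commute cinner_scale_right
        flip: matrix_vector_mul_assoc)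
  finally show ?thesis .
qed

lemma trace_orthonormal_basis:
  assumes "orthonormal_basis e"
  shows "trace A = (\<Sum>i\<in>UNIV. cinner (e i) (A *v e i))"
  using trace_mult_eigenbasis[OF assms, of "mat 1" "\<lambda>_. 1" A] by simp

lemma psd_cinner_nonneg: "psd A \<Longrightarrow> 0 \<le> Re (cinner v (A *v v))"
  by (simp add: psd_def quad_form_cinner)

lemma psd_eigenvalue_nonneg:
  assumes "psd A" "orthonormal_basis e" "A *v e i = of_real l *s e i"
  shows "l \<ge> 0"
  using psd_cinner_nonneg[OF assms(1), of "e i"] assms(2,3)
  by (simp add: cinner_scale_right orthonormal_basis_def)

lemma trace_mult_psd_nonneg:
  fixes M B :: "complex^'n^'n"
  assumes "psd M" "psd B"
  shows "0 \<le> Re (trace (M ** B))"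
proof -
  obtain f l where f: "orthonormal_basis f" and fl: "\<forall>j. B *v f j = of_real (l j) *s f j"
    using hermitian_spectral assms(2) psd_def by blast
  have "trace (M ** B) = (\<Sum>j\<in>UNIV. of_real (l j) * cinner (f j) (M *v f j))"
    by (rule trace_mult_eigenbasis[OF f]) (use fl in simp)
  hence "Re (trace (M ** B)) = (\<Sum>j\<in>UNIV. l j * Re (cinner (f j) (M *v f j)))"
    by simp
  also have "\<dots> \<ge> 0"
    using psd_eigenvalue_nonneg[OF assms(2) f] fl psd_cinner_nonneg[OF assms(1)]
    by (intro sum_nonneg mult_nonneg_nonneg) auto
  finally show ?thesis .
qed

lemma meas_nonneg: "psd (M x) \<Longrightarrow> psd A \<Longrightarrow> 0 \<le> meas M A x"
  by (simp add: meas_def trace_mult_psd_nonneg)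

lemma povm_sum_meas:
  assumes "povm X M"
  shows "(\<Sum>x\<in>X. meas M A x) = Re (trace A)"
proof -
  have "(\<Sum>x\<in>X. meas M A x) = Re (trace ((\<Sum>x\<in>X. M x) ** A))"
    by (simp add: meas_def sum_matrix_mult trace_sum Re_sum)
  thus ?thesis using assms by (simp add: povm_def)
qed

lemma meas_outer: "meas (\<lambda>i. outer (e i)) A i = Re (cinner (e i) (A *v e i))"
  by (simp add: meas_def trace_outer_mult)

lemma meas_comp: "meas (P \<circ> g) A = meas P A \<circ> g"
  by (simp add: meas_def fun_eq_iff)

lemma matrix_scaleR_component: "((t::real) *\<^sub>R (M::complex^'n^'m)) $ i $ j = of_real t * M $ i $ j"
  by (simp only: vector_scaleR_component) (rule scaleR_conv_of_real)

lemma scaleR_matrix_vector_mult: "((t::real) *\<^sub>R (A::complex^'n^'m)) *v v = of_real t *s (A *v v)"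
  unfolding matrix_vector_mult_def vec_eq_iff matrix_scaleR_component
  by (simp add: sum_distrib_left algebra_simps)

lemma hermitian_sum_scaleR:
  fixes M :: "'x \<Rightarrow> complex^'n^'n"
  assumes "\<forall>x\<in>X. hermitian (M x)"
  shows "hermitian (\<Sum>x\<in>X. t x *\<^sub>R M x)"
proof -
  have h: "M x $ i $ j = cnj (M x $ j $ i)" if "x \<in> X" for x i j
  proof -
    have "adjoint (M x) $ i $ j = M x $ i $ j" using assms that by (simp add: hermitian_def)
    thus ?thesis by (simp add: adjoint_def)
  qed
  show ?thesis
    unfolding hermitian_def adjoint_def vec_eq_iff
    by (auto simp: sum_component matrix_scaleR_component intro!: sum.cong) (metis h)
qed

lemma outer_mult_outer: "outer a ** outer b = (\<chi> i j. cinner a b * (a$i * cnj (b$j)))"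
  unfolding outer_def matrix_matrix_mult_def cinner_def vec_eq_iff
  by (simp add: sum_distrib_left sum_distrib_right algebra_simps)

lemma adjoint_outer: "adjoint (outer a) = outer a"
  by (simp add: adjoint_def outer_def vec_eq_iff mult.commute)

lemma rank_outer:
  fixes a :: "complex^'n"
  assumes "a \<noteq> 0"
  shows "rank (outer a) = 1"
proof -
  define ca :: "complex^'n" where "ca = (\<chi> j. cnj (a$j))"
  have rw: "row i (outer a) = a$i *s ca" for i by (simp add: row_def outer_def ca_def vec_eq_iff)
  obtain k where k: "a$k \<noteq> 0" using assms by (auto simp: vec_eq_iff)
  have ca0: "ca \<noteq> 0" using k by (auto simp: ca_def vec_eq_iff)
  have "rows (outer a) \<subseteq> vec.span {ca}"
    by (auto simp: rows_def rw intro: vec.span_scale vec.span_base)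
  moreover have "{ca} \<subseteq> vec.span (rows (outer a))"
  proof -
    have "ca = (1 / a$k) *s row k (outer a)" using k by (simp add: rw vector_smult_assoc)
    moreover have "(1 / a$k) *s row k (outer a) \<in> vec.span (rows (outer a))"
      by (intro vec.span_scale vec.span_base) (auto simp: rows_def)
    ultimately show ?thesis by simp
  qed
  ultimately have "vec.span (rows (outer a)) = vec.span {ca}"
    using vec.span_eq by blast
  hence "vec.dim (rows (outer a)) = vec.dim {ca}" by (metis vec.dim_span)
  thus ?thesis using ca0 by (simp add: row_rank_def_gen)
qed

lemma rank_zero: "rank (0::complex^'n^'m) = 0"
proof -
  have "rows (0::complex^'n^'m) = {0}" by (auto simp: rows_def row_def vec_eq_iff)
  thus ?thesis by (simp add: row_rank_def_gen)
qed

lemma orth_rank_one_family_outer: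
  assumes "orthonormal_basis e"
  shows "orth_rank_one_family (\<lambda>i. outer (e i))"
  unfolding orth_rank_one_family_def rank_one_projector_def
proof (intro conjI allI impI)
  fix i
  have ii: "cinner (e i) (e i) = 1" using assms by (simp add: orthonormal_basis_def)
  show "outer (e i) ** outer (e i) = outer (e i)" by (simp only: outer_mult_outer ii) (simp add: outer_def)
  show "adjoint (outer (e i)) = outer (e i)" by (rule adjoint_outer)
  have "e i \<noteq> 0" using ii by auto
  thus "rank (outer (e i)) = 1" by (rule rank_outer)
next
  fix i j :: 'a assume "i \<noteq> j"
  hence "cinner (e i) (e j) = 0" using assms by (simp add: orthonormal_basis_def)
  thus "outer (e i) ** outer (e j) = 0" by (simp add: outer_mult_outer vec_eq_iff)
qed

lemma orth_rank_one_family_psd: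
  assumes "orth_rank_one_family P"
  shows "psd (P i)"
proof -
  have idem: "P i ** P i = P i" and herm: "hermitian (P i)"
    using assms by (auto simp: orth_rank_one_family_def rank_one_projector_def hermitian_def)
  have "cinner v (P i *v v) = cinner (P i *v v) (P i *v v)" for v
    using hermitian_cinner[OF herm, of v "P i *v v"] idem by (simp add: matrix_vector_mul_assoc)
  thus ?thesis using herm by (simp add: psd_def quad_form_cinner cinner_self_nonneg)
qed

lemma projected_family_independent:
  fixes P :: "'n \<Rightarrow> complex^'n^'n" and u :: "'n \<Rightarrow> complex^'n"
  assumes Pu: "\<And>i j. P j *v u i = (if j = i then u i else 0)" and nz: "\<And>i. u i \<noteq> 0"
  shows "inj u" and "vec.independent (range u)"
proof -
  show inj: "inj u"
  proof (rule injI)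
    fix i j assume "u i = u j"
    hence "P i *v u j \<noteq> 0" using Pu[of i i] nz[of i] by simp
    thus "i = j" using Pu[of i j] by metis
  qed
  { fix c assume h: "(\<Sum>w\<in>range u. c w *s w) = 0"
    have "c (u j) = 0" for j
    proof -
      have "0 = P j *v (\<Sum>i\<in>UNIV. c (u i) *s u i)" using h by (simp add: sum.reindex[OF inj])
      also have "\<dots> = (\<Sum>i\<in>UNIV. c (u i) *s (P j *v u i))"
        by (simp add: vec.sum vector_scalar_commute)
      also have "\<dots> = (\<Sum>i\<in>UNIV. if j = i then c (u i) *s u i else 0)"
        by (rule sum.cong[OF refl]) (simp add: Pu)
      also have "\<dots> = c (u j) *s u j" by simp
      finally show ?thesis using nz[of j] by simp
    qed }
  thus "vec.independent (range u)" by (auto simp: vec.independent_explicit)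
qed

text \<open>Each projector has a nonzero vector in its range; these d vectors are mutually
  annihilated by the other projectors, hence form a basis fixed by the sum.\<close>
lemma orth_rank_one_family_sum:
  fixes P :: "'n \<Rightarrow> complex^'n^'n"
  assumes fam: "orth_rank_one_family P"
  shows "(\<Sum>i\<in>UNIV. P i) = mat 1"
proof -
  have idem: "P i ** P i = P i" for i
    using fam by (simp add: orth_rank_one_family_def rank_one_projector_def)
  have orth: "P j ** P i = 0" if "j \<noteq> i" for i j
    using fam that by (simp add: orth_rank_one_family_def)
  have "\<exists>x. P i *v x \<noteq> 0" for i
  proof (rule ccontr)
    assume "\<nexists>x. P i *v x \<noteq> 0"
    hence "P i = 0" by (simp add: matrix_eq)
    hence "rank (P i) = 0" by (simp add: rank_zero)
    thus False using fam by (simp add: orth_rank_one_family_def rank_one_projector_def)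
  qed
  then obtain x where x: "\<And>i. P i *v x i \<noteq> 0" by metis
  define u where "u i = P i *v x i" for i
  have Pu: "P j *v u i = (if j = i then u i else 0)" for i j
    using idem orth by (simp add: u_def matrix_vector_mul_assoc)
  have nz: "u i \<noteq> 0" for i using x by (simp add: u_def)
  have span: "vec.span (range u) = UNIV"
    using projected_family_independent[OF Pu nz] by (rule independent_family_span_UNIV)
  define S where "S = (\<Sum>i\<in>UNIV. P i)"
  have "S *v u k = u k" for k
    by (simp add: S_def sum_matrix_vector_mult Pu)
  moreover have "vec.subspace {x. S *v x = x}"
    by (auto simp: vec.subspace_def matrix_vector_right_distrib vector_scalar_commute)
  ultimately have "vec.span (range u) \<subseteq> {x. S *v x = x}"
    by (intro vec.span_minimal) auto
  hence "S = mat 1" using span by (auto simp: matrix_eq)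
  thus ?thesis by (simp add: S_def)
qed

lemma Re_cinner_outer: "Re (cinner f (outer e *v f)) = (cmod (cinner e f))^2"
proof -
  have "cinner f (outer e *v f) = cnj (cinner e f) * cinner e f"
    by (simp add: outer_mult_vector cinner_scale_right cnj_cinner mult.commute)
  thus ?thesis by (simp add: cnj_mult_self)
qed

lemma povm_outer:
  assumes "orthonormal_basis e"
  shows "povm UNIV (\<lambda>i. outer (e i))"
  using orth_rank_one_family_psd[OF orth_rank_one_family_outer[OF assms]]
    sum_outer_orthonormal_basis[OF assms]
  by (simp add: povm_def)

section \<open>Logarithmic inequalities and the Kullback-Leibler divergence\<close>

lemma sum_ln_add_le:
  fixes b t :: "'j \<Rightarrow> real"
  assumes "finite J" "\<forall>j\<in>J. b j \<ge> 0" "\<forall>j\<in>J. t j \<ge> 0" "R > 0"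
  shows "(\<Sum>j\<in>J. b j * ln (t j + R)) \<le> (\<Sum>j\<in>J. b j) * ln R + (\<Sum>j\<in>J. b j * t j) / R"
proof -
  have "b j * ln (t j + R) \<le> b j * ln R + b j * t j / R" if j: "j \<in> J" for j
  proof -
    have "t j + R = R * (1 + t j / R)"
      using assms(4) by (simp add: field_simps)
    hence "ln (t j + R) = ln (R * (1 + t j / R))" by simp
    also have "\<dots> = ln R + ln (1 + t j / R)"
      using assms(3,4) j by (intro ln_mult_pos) (auto simp: add_pos_nonneg)
    also have "\<dots> \<le> ln R + t j / R"
      using ln_add_one_self_le_self[of "t j / R"] assms(3,4) j by simp
    finally show ?thesis
      using assms(2) j mult_left_mono by (fastforce simp: distrib_left)
  qed
  hence "(\<Sum>j\<in>J. b j * ln (t j + R)) \<le> (\<Sum>j\<in>J. b j * ln R + b j * t j / R)"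
    by (rule sum_mono)
  thus ?thesis by (simp add: sum.distrib sum_distrib_right sum_divide_distrib)
qed

text \<open>The derivative of \<open>R \<mapsto> \<Sum>j. b j ln (t j + R) - \<Sum>i. a i ln (l i + R)\<close> is the difference of
  the two resolvent sums, so this function increases on \<open>[0, \<infinity>)\<close>; since the masses agree it is
  \<open>O(1/R)\<close>, hence it is nonpositive at \<open>R = 0\<close>.\<close>
lemma sum_ln_le_of_resolvent_le:
  fixes a :: "'i \<Rightarrow> real" and b :: "'j \<Rightarrow> real"
  assumes I: "finite I" and J: "finite J" and a: "\<forall>i\<in>I. a i \<ge> 0" and b: "\<forall>j\<in>J. b j \<ge> 0"
    and l: "\<forall>i\<in>I. l i > 0" and t: "\<forall>j\<in>J. t j > 0" and mass: "sum a I = sum b J"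
    and resolvent: "\<And>s. s \<ge> 0 \<Longrightarrow> (\<Sum>i\<in>I. a i / (l i + s)) \<le> (\<Sum>j\<in>J. b j / (t j + s))"
  shows "(\<Sum>j\<in>J. b j * ln (t j)) \<le> (\<Sum>i\<in>I. a i * ln (l i))"
proof -
  define \<phi> where "\<phi> R = (\<Sum>j\<in>J. b j * ln (t j + R)) - (\<Sum>i\<in>I. a i * ln (l i + R))" for R
  have mono: "\<phi> 0 \<le> \<phi> R" if R: "R \<ge> 0" for R
  proof (rule DERIV_nonneg_imp_nondecreasing[OF R])
    fix x :: real assume x: "0 \<le> x" "x \<le> R"
    have "((\<lambda>R. b j * ln (t j + R)) has_real_derivative b j / (t j + x)) (at x)" if "j \<in> J" for j
      using t that x by (auto intro!: derivative_eq_intros simp: field_simps add_pos_nonneg)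
    moreover have "((\<lambda>R. a i * ln (l i + R)) has_real_derivative a i / (l i + x)) (at x)" if "i \<in> I" for i
      using l that x by (auto intro!: derivative_eq_intros simp: field_simps add_pos_nonneg)
    ultimately have "(\<phi> has_real_derivative (\<Sum>j\<in>J. b j / (t j + x)) - (\<Sum>i\<in>I. a i / (l i + x))) (at x)"
      unfolding \<phi>_def by (intro DERIV_diff DERIV_sum) auto
    moreover have "(\<Sum>j\<in>J. b j / (t j + x)) - (\<Sum>i\<in>I. a i / (l i + x)) \<ge> 0"
      using resolvent[OF x(1)] by simp
    ultimately show "\<exists>y. (\<phi> has_real_derivative y) (at x) \<and> 0 \<le> y" by blast
  qed
  define C where "C = (\<Sum>j\<in>J. b j * t j)"
  have C0: "C \<ge> 0" unfolding C_def using b t by (intro sum_nonneg) (auto simp: less_imp_le)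
  have upper: "\<phi> R \<le> C / R" if R: "R > 0" for R
  proof -
    have "(\<Sum>j\<in>J. b j * ln (t j + R)) \<le> (\<Sum>j\<in>J. b j) * ln R + C / R"
      unfolding C_def using sum_ln_add_le[OF J b _ R] t by (simp add: less_imp_le)
    moreover have "(\<Sum>i\<in>I. a i) * ln R \<le> (\<Sum>i\<in>I. a i * ln (l i + R))"
      unfolding sum_distrib_right using a l R by (intro sum_mono mult_left_mono) auto
    moreover have "(\<Sum>i\<in>I. a i) * ln R = (\<Sum>j\<in>J. b j) * ln R" using mass by simp
    ultimately show ?thesis unfolding \<phi>_def by linarith
  qed
  have "\<phi> 0 \<le> 0"
  proof (rule ccontr)
    assume "\<not> \<phi> 0 \<le> 0"
    hence p: "\<phi> 0 > 0" by simp
    define R where "R = (C + 1) / \<phi> 0"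
    have R: "R > 0" using p C0 by (simp add: R_def)
    have "\<phi> 0 \<le> C / R" using mono[of R] upper[OF R] R by simp
    also have "C / R < \<phi> 0" using p C0 by (simp add: R_def field_simps)
    finally show False by simp
  qed
  thus ?thesis by (simp add: \<phi>_def)
qed

lemma KL_lower_bound:
  fixes P Q \<mu> :: "'a \<Rightarrow> real"
  assumes P: "\<forall>i\<in>S. P i \<ge> 0" and Q: "\<forall>i\<in>S. Q i \<ge> 0" and \<mu>: "\<forall>i\<in>S. \<mu> i > 0"
  shows "ereal (\<Sum>i\<in>S. P i * ln (\<mu> i) + P i - \<mu> i * Q i) \<le> KL S P Q"
proof (cases "\<exists>x\<in>S. P x \<noteq> 0 \<and> Q x = 0")
  case True thus ?thesis by (simp add: KL_def)
next
  case False
  have "P i * ln (\<mu> i) + P i - \<mu> i * Q i \<le> (if P i = 0 then 0 else P i * ln (P i / Q i))"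
    if i: "i \<in> S" for i
  proof (cases "P i = 0")
    case True thus ?thesis using Q \<mu> i by (simp add: less_imp_le)
  next
    case Pn: False
    have pos: "P i > 0" "Q i > 0" "\<mu> i > 0" using P Q \<mu> i False Pn by force+
    have "ln (\<mu> i * Q i / P i) \<le> \<mu> i * Q i / P i - 1"
      using pos by (intro ln_le_minus_one) simp
    hence "P i * ln (\<mu> i * Q i / P i) \<le> \<mu> i * Q i - P i"
      using pos by (simp add: field_simps)
    moreover have "ln (\<mu> i) = ln (P i / Q i) + ln (\<mu> i * Q i / P i)"
      using pos by (simp add: ln_div ln_mult)
    hence "P i * ln (\<mu> i) = P i * ln (P i / Q i) + P i * ln (\<mu> i * Q i / P i)"
      by (simp add: distrib_left)
    ultimately show ?thesis using Pn by simp
  qed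
  hence "(\<Sum>i\<in>S. P i * ln (\<mu> i) + P i - \<mu> i * Q i) \<le> (\<Sum>i\<in>S. if P i = 0 then 0 else P i * ln (P i / Q i))"
    by (rule sum_mono)
  thus ?thesis using False by (simp add: KL_def)
qed

lemma KL_reindex:
  assumes "bij_betw g A B"
  shows "KL A (P \<circ> g) (Q \<circ> g) = KL B P Q"
proof -
  have "(\<exists>x\<in>A. P (g x) \<noteq> 0 \<and> Q (g x) = 0) \<longleftrightarrow> (\<exists>y\<in>B. P y \<noteq> 0 \<and> Q y = 0)"
    using assms by (auto simp: bij_betw_def)
  moreover have "(\<Sum>x\<in>A. (\<lambda>y. if P y = 0 then 0 else P y * ln (P y / Q y)) (g x))
      = (\<Sum>y\<in>B. if P y = 0 then 0 else P y * ln (P y / Q y))"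
    by (rule sum.reindex_bij_betw[OF assms])
  ultimately show ?thesis by (simp add: KL_def o_def)
qed

lemma ereal_le_of_perturbed_le:
  fixes x :: ereal and c k :: real
  assumes "k \<ge> 0" and le: "\<And>\<delta>. \<delta> > 0 \<Longrightarrow> ereal (c - \<delta> * k) \<le> x"
  shows "ereal c \<le> x"
proof (rule ereal_le_epsilon2)
  fix \<epsilon> :: real assume \<epsilon>: "\<epsilon> > 0"
  define \<delta> where "\<delta> = \<epsilon> / (k + 1)"
  have \<delta>: "\<delta> > 0" using \<epsilon> assms(1) by (simp add: \<delta>_def)
  have "\<delta> * k \<le> \<delta> * (k + 1)" using \<delta> by simp
  also have "\<dots> = \<epsilon>" using assms(1) by (simp add: \<delta>_def)
  finally have "ereal c \<le> ereal (c - \<delta> * k) + ereal \<epsilon>" by simp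
  also have "\<dots> \<le> x + ereal \<epsilon>" using le[OF \<delta>] by (rule add_right_mono)
  finally show "ereal c \<le> x + ereal \<epsilon>" .
qed

section \<open>POVMs diagonalised by a weighted sum\<close>

lemma psd_cross_term_le:
  fixes M :: "complex^'n^'n"
  assumes "psd M" "c > 0"
  shows "2 * Re (cinner u (M *v v)) - c * Re (cinner u (M *v u)) \<le> Re (cinner v (M *v v)) / c"
proof -
  have "0 \<le> Re (cinner (v + of_real (- c) *s u) (M *v (v + of_real (- c) *s u)))"
    using assms(1) by (rule psd_cinner_nonneg)
  also have "\<dots> = Re (cinner v (M *v v)) - 2 * c * Re (cinner u (M *v v)) + c^2 * Re (cinner u (M *v u))"
    using hermitian_quadratic_expand[of M v "- c" u] assms(1) by (simp add: psd_def)
  finally have "c * (2 * Re (cinner u (M *v v)) - c * Re (cinner u (M *v u))) \<le> Re (cinner v (M *v v))"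
    by (simp add: power2_eq_square algebra_simps)
  thus ?thesis using assms(2) by (simp add: pos_le_divide_eq mult.commute)
qed

locale povm_eigenbasis =
  fixes X :: "'x set" and M :: "'x \<Rightarrow> complex^'n^'n" and t :: "'x \<Rightarrow> real"
    and e :: "'n \<Rightarrow> complex^'n" and l :: "'n \<Rightarrow> real"
  assumes povm: "povm X M"
    and weights_nonneg: "\<And>x. x \<in> X \<Longrightarrow> t x \<ge> 0"
    and basis: "orthonormal_basis e"
    and eigen: "\<And>i. (\<Sum>x\<in>X. t x *\<^sub>R M x) *v e i = of_real (l i) *s e i"
begin

lemma finite_X: "finite X" and psd_M: "\<And>x. x \<in> X \<Longrightarrow> psd (M x)"
  and sum_M_vector: "\<And>v. (\<Sum>x\<in>X. M x *v v) = v"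
  using povm by (auto simp: povm_def simp flip: sum_matrix_vector_mult)

lemma weighted_vector: "(\<Sum>x\<in>X. t x *\<^sub>R M x) *v v = (\<Sum>x\<in>X. of_real (t x) *s (M x *v v))"
  by (simp add: sum_matrix_vector_mult scaleR_matrix_vector_mult)

lemma eigenvalue_nonneg: "l i \<ge> 0"
proof -
  have "l i = Re (cinner (e i) ((\<Sum>x\<in>X. t x *\<^sub>R M x) *v e i))"
    using basis by (simp add: eigen cinner_scale_right orthonormal_basis_def)
  also have "\<dots> = (\<Sum>x\<in>X. t x * Re (cinner (e i) (M x *v e i)))"
    by (simp add: weighted_vector cinner_sum_right cinner_scale_right Re_sum)
  also have "\<dots> \<ge> 0"
    using weights_nonneg psd_M by (intro sum_nonneg mult_nonneg_nonneg) (auto simp: psd_cinner_nonneg)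
  finally show ?thesis .
qed

text \<open>With \<open>u = (\<omega> + s)\<^sup>-\<^sup>1 v\<close>, where \<open>\<omega> = \<Sum>x. t x M x\<close>, summing the bound
  \<open>psd_cross_term_le\<close> over the POVM yields this operator Jensen inequality for \<open>x \<mapsto> 1 / (x + s)\<close>.\<close>
lemma resolvent_vector_le:
  assumes s: "s > 0"
  shows "(\<Sum>i\<in>UNIV. (cmod (cinner (e i) v))^2 / (l i + s)) \<le> (\<Sum>x\<in>X. Re (cinner v (M x *v v)) / (t x + s))"
proof -
  have lp: "l i + s > 0" for i using eigenvalue_nonneg[of i] s by simp
  hence lp': "complex_of_real (l i) + of_real s \<noteq> 0" for i
    by (metis of_real_add of_real_eq_0_iff less_irrefl)
  define a where "a i = of_real (1 / (l i + s)) * cinner (e i) v" for i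
  define u where "u = (\<Sum>i\<in>UNIV. a i *s e i)"
  have "(\<Sum>x\<in>X. of_real (t x + s) *s (M x *v u)) = (\<Sum>x\<in>X. t x *\<^sub>R M x) *v u + of_real s *s u"
    by (simp add: weighted_vector vector_sadd_rdistrib sum.distrib sum_M_vector
        flip: vec.scale_sum_right)
  also have "\<dots> = (\<Sum>i\<in>UNIV. (of_real (l i + s) * a i) *s e i)"
    by (simp add: u_def vec.sum vector_scalar_commute eigen vector_smult_assoc vector_sadd_rdistrib
        sum.distrib vec.scale_sum_right algebra_simps)
  also have "\<dots> = v"
    using lp' by (subst orthonormal_basis_expansion[OF basis, of v]) (simp add: a_def)
  finally have resolvent: "(\<Sum>x\<in>X. of_real (t x + s) *s (M x *v u)) = v" .
  have "Re (cinner u v) = (\<Sum>i\<in>UNIV. (cmod (cinner (e i) v))^2 / (l i + s))"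
    by (simp add: u_def a_def cinner_sum_left cinner_scale_left cnj_mult_self mult.assoc Re_sum)
  moreover have "(\<Sum>x\<in>X. 2 * Re (cinner u (M x *v v)) - (t x + s) * Re (cinner u (M x *v u)))
      \<le> (\<Sum>x\<in>X. Re (cinner v (M x *v v)) / (t x + s))"
    using psd_M weights_nonneg s by (intro sum_mono psd_cross_term_le) (auto simp: add_nonneg_pos)
  moreover have "(\<Sum>x\<in>X. Re (cinner u (M x *v v))) = Re (cinner u v)"
    by (simp add: sum_M_vector flip: Re_sum cinner_sum_right)
  moreover have "(\<Sum>x\<in>X. (t x + s) * Re (cinner u (M x *v u))) = Re (cinner u v)"
  proof -
    have "(\<Sum>x\<in>X. (t x + s) * Re (cinner u (M x *v u)))
        = Re (cinner u (\<Sum>x\<in>X. of_real (t x + s) *s (M x *v u)))"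
      by (simp add: cinner_sum_right cinner_scale_right Re_sum vector_sadd_rdistrib cinner_add_right
          distrib_right)
    thus ?thesis by (simp only: resolvent)
  qed
  ultimately show ?thesis by (simp add: sum_subtractf sum_distrib_left[symmetric])
qed

lemma resolvent_trace_le:
  assumes "psd \<rho>" "s > 0"
  shows "(\<Sum>i\<in>UNIV. meas (\<lambda>i. outer (e i)) \<rho> i / (l i + s)) \<le> (\<Sum>x\<in>X. meas M \<rho> x / (t x + s))"
proof -
  obtain f r where f: "orthonormal_basis f" and fr: "\<And>j. \<rho> *v f j = of_real (r j) *s f j"
    using hermitian_spectral assms(1) psd_def by blast
  have r: "r j \<ge> 0" for j using psd_eigenvalue_nonneg[OF assms(1) f fr] .
  have meas_expand: "meas N \<rho> y = (\<Sum>j\<in>UNIV. r j * Re (cinner (f j) (N y *v f j)))" for N :: "'y \<Rightarrow> _" and y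
  proof -
    have "trace (N y ** \<rho>) = (\<Sum>j\<in>UNIV. of_real (r j) * cinner (f j) (N y *v f j))"
      by (rule trace_mult_eigenbasis[OF f]) (use fr in simp)
    thus ?thesis by (simp add: meas_def Re_sum)
  qed
  have "(\<Sum>i\<in>UNIV. meas (\<lambda>i. outer (e i)) \<rho> i / (l i + s))
      = (\<Sum>j\<in>UNIV. r j * (\<Sum>i\<in>UNIV. (cmod (cinner (e i) (f j)))^2 / (l i + s)))"
    by (simp add: meas_expand Re_cinner_outer sum_divide_distrib sum_distrib_left) (rule sum.swap)
  also have "\<dots> \<le> (\<Sum>j\<in>UNIV. r j * (\<Sum>x\<in>X. Re (cinner (f j) (M x *v f j)) / (t x + s)))"
    using r resolvent_vector_le[OF assms(2)] by (intro sum_mono mult_left_mono) auto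
  also have "\<dots> = (\<Sum>x\<in>X. meas M \<rho> x / (t x + s))"
    by (simp add: meas_expand sum_divide_distrib sum_distrib_left) (rule sum.swap)
  finally show ?thesis .
qed

lemma sum_eigenvalue_meas:
  "(\<Sum>i\<in>UNIV. l i * meas (\<lambda>i. outer (e i)) \<sigma> i) = (\<Sum>x\<in>X. t x * meas M \<sigma> x)"
proof -
  have herm: "hermitian (\<Sum>x\<in>X. t x *\<^sub>R M x)"
    using psd_M by (intro hermitian_sum_scaleR) (simp add: psd_def)
  have "(\<Sum>x\<in>X. t x * meas M \<sigma> x)
      = (\<Sum>i\<in>UNIV. Re (cinner (e i) ((\<Sum>x\<in>X. t x *\<^sub>R M x) *v (\<sigma> *v e i))))"
    by (simp add: meas_def trace_orthonormal_basis[OF basis] weighted_vector cinner_sum_right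
        cinner_scale_right Re_sum sum_distrib_left flip: matrix_vector_mul_assoc) (rule sum.swap)
  also have "\<dots> = (\<Sum>i\<in>UNIV. l i * meas (\<lambda>i. outer (e i)) \<sigma> i)"
    by (simp add: hermitian_cinner[OF herm] eigen cinner_scale_left meas_outer)
  finally show ?thesis ..
qed

lemma sum_meas_ln_le:
  assumes "psd \<rho>" "\<delta> > 0"
  shows "(\<Sum>x\<in>X. meas M \<rho> x * ln (t x + \<delta>))
    \<le> (\<Sum>i\<in>UNIV. meas (\<lambda>i. outer (e i)) \<rho> i * ln (l i + \<delta>))"
proof (rule sum_ln_le_of_resolvent_le)
  show "sum (meas (\<lambda>i. outer (e i)) \<rho>) UNIV = sum (meas M \<rho>) X"
    using povm_sum_meas[OF povm] povm_sum_meas[OF povm_outer[OF basis]] by simp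
  show "(\<Sum>i\<in>UNIV. meas (\<lambda>i. outer (e i)) \<rho> i / (l i + \<delta> + s)) \<le> (\<Sum>x\<in>X. meas M \<rho> x / (t x + \<delta> + s))"
    if "s \<ge> 0" for s
    using resolvent_trace_le[OF assms(1), of "\<delta> + s"] that assms(2) by (simp add: add.assoc)
qed (use finite_X assms psd_M weights_nonneg eigenvalue_nonneg povm_outer[OF basis] in
  \<open>auto simp: meas_nonneg povm_def add_nonneg_pos\<close>)

text \<open>The shift \<open>\<delta> > 0\<close> keeps the logarithms of the eigenvalues, which may vanish, finite.\<close>
lemma KL_eigenbasis_lower_bound:
  assumes rho: "density_operator \<rho>" and sig: "psd \<sigma>" and \<delta>: "\<delta> > 0"
    and tpos: "\<And>x. x \<in> X \<Longrightarrow> meas M \<rho> x \<noteq> 0 \<Longrightarrow> t x > 0"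
  shows "ereal ((\<Sum>x\<in>{x\<in>X. meas M \<rho> x \<noteq> 0}. meas M \<rho> x * ln (t x)) + 1
      - (\<Sum>x\<in>X. t x * meas M \<sigma> x) - \<delta> * Re (trace \<sigma>))
    \<le> KL UNIV (meas (\<lambda>i. outer (e i)) \<rho>) (meas (\<lambda>i. outer (e i)) \<sigma>)"
proof -
  have psd_rho: "psd \<rho>" and tr_rho: "trace \<rho> = 1" using rho by (auto simp: density_operator_def)
  define p where "p = meas M \<rho>"
  define p' where "p' = meas (\<lambda>i. outer (e i)) \<rho>"
  define q' where "q' = meas (\<lambda>i. outer (e i)) \<sigma>"
  have "(\<Sum>x\<in>{x\<in>X. p x \<noteq> 0}. p x * ln (t x)) = (\<Sum>x\<in>X. if p x \<noteq> 0 then p x * ln (t x) else 0)"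
    by (rule sum.inter_filter[OF finite_X])
  also have "\<dots> \<le> (\<Sum>x\<in>X. p x * ln (t x + \<delta>))"
    using tpos \<delta> psd_M psd_rho
    by (intro sum_mono) (auto simp: p_def meas_nonneg intro!: mult_left_mono ln_mono)
  also have "\<dots> \<le> (\<Sum>i\<in>UNIV. p' i * ln (l i + \<delta>))"
    unfolding p_def p'_def by (rule sum_meas_ln_le[OF psd_rho \<delta>])
  moreover have "(\<Sum>i\<in>UNIV. p' i * ln (l i + \<delta>) + p' i - (l i + \<delta>) * q' i)
      = (\<Sum>i\<in>UNIV. p' i * ln (l i + \<delta>)) + (\<Sum>i\<in>UNIV. p' i) - (\<Sum>i\<in>UNIV. l i * q' i)
        - \<delta> * (\<Sum>i\<in>UNIV. q' i)"
    by (simp add: sum.distrib sum_subtractf distrib_right sum_distrib_left)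
  ultimately have "(\<Sum>x\<in>{x\<in>X. p x \<noteq> 0}. p x * ln (t x)) + 1 - (\<Sum>x\<in>X. t x * meas M \<sigma> x)
      - \<delta> * Re (trace \<sigma>) \<le> (\<Sum>i\<in>UNIV. p' i * ln (l i + \<delta>) + p' i - (l i + \<delta>) * q' i)"
    using povm_sum_meas[OF povm_outer[OF basis], of \<rho>] povm_sum_meas[OF povm_outer[OF basis], of \<sigma>]
      sum_eigenvalue_meas[of \<sigma>] tr_rho
    by (simp add: p'_def q'_def)
  also have "\<dots> \<le> KL UNIV p' q'"
    using povm_outer[OF basis] psd_rho sig eigenvalue_nonneg \<delta>
    by (intro KL_lower_bound) (auto simp: p'_def q'_def povm_def meas_nonneg add_nonneg_pos)
  finally show ?thesis by (simp add: p_def p'_def q'_def)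
qed

end

text \<open>The projective measurement in an eigenbasis of \<open>\<Sum>x. t x M x\<close> attains the variational
  lower bound \<open>\<Sum>x. P x ln (t x) + 1 - \<Sum>x. Q x t x\<close> of the divergence of the POVM \<open>M\<close>.\<close>
lemma variational_le_proj_measured_rel_entropy:
  fixes \<rho> \<sigma> :: "complex^'n^'n" and M :: "'x \<Rightarrow> complex^'n^'n"
  assumes rho: "density_operator \<rho>" and sig: "psd \<sigma>" and pv: "povm X M"
    and t: "\<And>x. x \<in> X \<Longrightarrow> t x \<ge> 0" and tpos: "\<And>x. x \<in> X \<Longrightarrow> meas M \<rho> x \<noteq> 0 \<Longrightarrow> t x > 0"
  shows "ereal ((\<Sum>x\<in>{x\<in>X. meas M \<rho> x \<noteq> 0}. meas M \<rho> x * ln (t x)) + 1 - (\<Sum>x\<in>X. t x * meas M \<sigma> x))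
    \<le> proj_measured_rel_entropy \<rho> \<sigma>"
proof -
  have "hermitian (\<Sum>x\<in>X. t x *\<^sub>R M x)"
    using pv by (intro hermitian_sum_scaleR) (simp add: povm_def psd_def)
  then obtain e l where "orthonormal_basis e" "\<And>i. (\<Sum>x\<in>X. t x *\<^sub>R M x) *v e i = of_real (l i) *s e i"
    using hermitian_spectral by blast
  then interpret povm_eigenbasis X M t e l
    using pv t by unfold_locales auto
  have "Re (trace \<sigma>) \<ge> 0"
    using povm_outer[OF basis] sig povm_sum_meas[OF povm_outer[OF basis], of \<sigma>]
    by (metis povm_def sum_nonneg meas_nonneg)
  hence "ereal ((\<Sum>x\<in>{x\<in>X. meas M \<rho> x \<noteq> 0}. meas M \<rho> x * ln (t x)) + 1 - (\<Sum>x\<in>X. t x * meas M \<sigma> x))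
      \<le> KL UNIV (meas (\<lambda>i. outer (e i)) \<rho>) (meas (\<lambda>i. outer (e i)) \<sigma>)"
    by (rule ereal_le_of_perturbed_le)
      (use KL_eigenbasis_lower_bound[OF rho sig _ tpos] in \<open>simp add: algebra_simps\<close>)
  also have "\<dots> \<le> proj_measured_rel_entropy \<rho> \<sigma>"
    unfolding proj_measured_rel_entropy_def
    by (rule SUP_upper) (simp add: orth_rank_one_family_outer[OF basis])
  finally show ?thesis .
qed

text \<open>If \<open>P x > 0 = Q x\<close> for some outcome, the weight \<open>N\<close> on \<open>x\<close> and \<open>1\<close> elsewhere makes
  the variational bound \<open>P x ln N + 1 - tr \<sigma>\<close> unbounded.\<close>
lemma proj_measured_rel_entropy_infinite:
  fixes \<rho> \<sigma> :: "complex^'n^'n" and M :: "'x \<Rightarrow> complex^'n^'n"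
  assumes rho: "density_operator \<rho>" and sig: "psd \<sigma>" and pv: "povm X M"
    and x0: "x0 \<in> X" "meas M \<rho> x0 \<noteq> 0" "meas M \<sigma> x0 = 0"
  shows "proj_measured_rel_entropy \<rho> \<sigma> = \<infinity>"
proof (rule ereal_top)
  fix B :: real
  define p where "p = meas M \<rho>"
  define N where "N = exp ((B - 1 + Re (trace \<sigma>)) / p x0)"
  define t where "t x = (if x = x0 then N else 1)" for x
  have fin: "finite X" using pv by (simp add: povm_def)
  have "(\<Sum>x\<in>{x\<in>X. p x \<noteq> 0}. p x * ln (t x)) = p x0 * ln N"
    using fin x0 by (subst sum.remove[of _ x0]) (auto simp: t_def p_def intro!: sum.neutral)
  also have "\<dots> = B - 1 + Re (trace \<sigma>)" using x0(2) by (simp add: N_def p_def)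
  finally have K: "(\<Sum>x\<in>{x\<in>X. p x \<noteq> 0}. p x * ln (t x)) = B - 1 + Re (trace \<sigma>)" .
  have "(\<Sum>x\<in>X. t x * meas M \<sigma> x) = (\<Sum>x\<in>X. meas M \<sigma> x)"
    using x0(3) by (intro sum.cong) (auto simp: t_def)
  hence T: "(\<Sum>x\<in>X. t x * meas M \<sigma> x) = Re (trace \<sigma>)" by (simp add: povm_sum_meas[OF pv])
  have "N > 0" by (simp add: N_def)
  hence "ereal ((\<Sum>x\<in>{x\<in>X. p x \<noteq> 0}. p x * ln (t x)) + 1 - (\<Sum>x\<in>X. t x * meas M \<sigma> x))
      \<le> proj_measured_rel_entropy \<rho> \<sigma>"
    unfolding p_def by (intro variational_le_proj_measured_rel_entropy[OF rho sig pv]) (auto simp: t_def)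
  thus "ereal B \<le> proj_measured_rel_entropy \<rho> \<sigma>" by (simp add: K T)
qed

text \<open>Otherwise the weight \<open>t = P / Q\<close> turns the variational bound into the divergence itself.\<close>
lemma KL_povm_le_proj_measured_rel_entropy:
  fixes \<rho> \<sigma> :: "complex^'n^'n" and M :: "'x \<Rightarrow> complex^'n^'n"
  assumes rho: "density_operator \<rho>" and sig: "psd \<sigma>" and pv: "povm X M"
  shows "KL X (meas M \<rho>) (meas M \<sigma>) \<le> proj_measured_rel_entropy \<rho> \<sigma>"
proof (cases "\<exists>x\<in>X. meas M \<rho> x \<noteq> 0 \<and> meas M \<sigma> x = 0")
  case True
  thus ?thesis using proj_measured_rel_entropy_infinite[OF rho sig pv] by auto
next
  case False
  define p where "p = meas M \<rho>"
  define q where "q = meas M \<sigma>"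
  define t where "t x = (if p x = 0 then 0 else p x / q x)" for x
  have fin: "finite X" and psd_M: "\<And>x. x \<in> X \<Longrightarrow> psd (M x)" using pv by (auto simp: povm_def)
  have p: "p x \<ge> 0" and q: "q x \<ge> 0" if "x \<in> X" for x
    using that psd_M rho sig by (auto simp: p_def q_def density_operator_def meas_nonneg)
  have q_pos: "q x > 0" if "x \<in> X" "p x \<noteq> 0" for x
    using False q that by (force simp: p_def q_def)
  have "t x * q x = p x" if "x \<in> X" for x
    using q_pos[OF that] by (cases "p x = 0") (auto simp: t_def)
  hence "(\<Sum>x\<in>X. t x * q x) = (\<Sum>x\<in>X. p x)" by simp
  also have "\<dots> = 1" using povm_sum_meas[OF pv] rho by (simp add: p_def density_operator_def)
  finally have T: "(\<Sum>x\<in>X. t x * q x) = 1" .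
  have "(\<Sum>x\<in>{x\<in>X. p x \<noteq> 0}. p x * ln (t x)) = (\<Sum>x\<in>X. if p x = 0 then 0 else p x * ln (p x / q x))"
    unfolding sum.inter_filter[OF fin] by (intro sum.cong) (auto simp: t_def)
  moreover have "ereal ((\<Sum>x\<in>{x\<in>X. p x \<noteq> 0}. p x * ln (t x)) + 1 - (\<Sum>x\<in>X. t x * q x))
      \<le> proj_measured_rel_entropy \<rho> \<sigma>"
  proof -
    have "t x \<ge> 0" "p x \<noteq> 0 \<Longrightarrow> t x > 0" if "x \<in> X" for x
      using p[OF that] q_pos[OF that] by (auto simp: t_def)
    thus ?thesis
      unfolding p_def q_def by (intro variational_le_proj_measured_rel_entropy[OF rho sig pv]) auto
  qed
  ultimately show ?thesis
    using False T unfolding KL_def p_def[symmetric] q_def[symmetric] by auto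
qed

lemma measured_le_proj_measured_rel_entropy:
  assumes "density_operator \<rho>" "psd \<sigma>"
  shows "measured_rel_entropy \<rho> \<sigma> \<le> proj_measured_rel_entropy \<rho> \<sigma>"
  unfolding measured_rel_entropy_def
  using KL_povm_le_proj_measured_rel_entropy[OF assms] by (auto intro!: SUP_least)

text \<open>A projective family is itself a POVM, once its index type is enumerated by \<open>{0..<d}\<close>.\<close>
lemma proj_measured_le_measured_rel_entropy:
  fixes \<rho> \<sigma> :: "complex^'n^'n"
  shows "proj_measured_rel_entropy \<rho> \<sigma> \<le> measured_rel_entropy \<rho> \<sigma>"
  unfolding proj_measured_rel_entropy_def
proof (rule SUP_least)
  fix P :: "'n \<Rightarrow> complex^'n^'n" assume "P \<in> {P. orth_rank_one_family P}"
  hence fam: "orth_rank_one_family P" by simp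
  obtain g where g: "bij_betw g {0..<CARD('n)} (UNIV::'n set)"
    using ex_bij_betw_nat_finite[of "UNIV::'n set"] by auto
  have "povm {0..<CARD('n)} (P \<circ> g)"
    using orth_rank_one_family_sum[OF fam] orth_rank_one_family_psd[OF fam]
    by (simp add: povm_def sum.reindex_bij_betw[OF g])
  hence "KL {0..<CARD('n)} (meas (P \<circ> g) \<rho>) (meas (P \<circ> g) \<sigma>) \<le> measured_rel_entropy \<rho> \<sigma>"
    unfolding measured_rel_entropy_def by (intro SUP_upper2[of "({0..<CARD('n)}, P \<circ> g)"]) auto
  moreover have "KL {0..<CARD('n)} (meas (P \<circ> g) \<rho>) (meas (P \<circ> g) \<sigma>) = KL UNIV (meas P \<rho>) (meas P \<sigma>)"
    using KL_reindex[OF g] by (simp add: meas_comp)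
  ultimately show "KL UNIV (meas P \<rho>) (meas P \<sigma>) \<le> measured_rel_entropy \<rho> \<sigma>" by simp
qed

theorem theorem2:
  fixes \<rho> \<sigma> :: "complex^'n^'n"
  assumes "density_operator \<rho>" and "psd \<sigma>"
  shows "proj_measured_rel_entropy \<rho> \<sigma> = measured_rel_entropy \<rho> \<sigma>"
  using proj_measured_le_measured_rel_entropy measured_le_proj_measured_rel_entropy[OF assms]
  by (rule antisym)

end
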